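(* Let $L\ge0$ and $R\ge1$ be integers and let $V$ be the space of $R$-tuples $f=(f[1],\ldots,f[R])$ of functions on the sphere $S^2$ of the form $f[r](\theta,\varphi)=\sum_{\ell=0}^L\sum_{m=-\ell}^\ell A_\ell^m[r]\,Y_\ell^m(\theta,\varphi)$ with $A_\ell^m[r]\in\mathbb C$, on which $SO(3)$ acts shell-wise by $(g\cdot f)[r](x)=f[r](g^{-1}x)$. Let $T$ be the tomographic (slice) operator $T h(\varphi)=h(\pi/2,\varphi)$ restricting a function on $S^2$ to the equator. Define the unprojected second moment of $f$ as the collection of functions $$m^2_f[r_1,r_2](\theta_1,\varphi_1,\theta_2,\varphi_2)=\int_{SO(3)}(g\cdot f)[r_1](\theta_1,\varphi_1)\,\overline{(g\cdot f)[r_2](\theta_2,\varphi_2)}\,dg,\quad r_1,r_2\in\{1,\ldots,R\},$$ and the projected (cryo-EM) second moment as $$\int_{SO(3)}T\big((g\cdot f)[r_1]\big)(\varphi_1)\,\overline{T\big((g\cdot f)[r_2]\big)(\varphi_2)}\,dg,\quad r_1,r_2\in\{1,\ldots,R\}.$$ Then the projected second moment of $f$ determines the unprojected second moment of $f$ and conversely; in particular, for $f,f'\in V$ the projected second moments coincide if and only if the unprojected second moments coincide.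
   Context: $Y_\ell^m$ ($-\ell\le m\le\ell$) are the spherical harmonics of degree $\ell$, forming an orthonormal basis of the $(2\ell+1)$-dimensional irreducible representation of $SO(3)$; $(\theta,\varphi)$ are spherical coordinates; $dg$ is the normalized Haar measure on $SO(3)$. In cryo-EM, $f$ models a radially discretized (with $R$ shells), bandlimited (bandlimit $L$) Fourier transform of a 3-D structure, and by the Fourier slice theorem the tomographic projection corresponds to restriction to a central plane, here the equator $\theta=\pi/2$. *)

theory Defs
  imports "HOL-Probability.Probability" "HOL-Computational_Algebra.Polynomial"
begin

definition legendre_poly :: "nat \<Rightarrow> real poly" where
  "legendre_poly l = smult (1 / (2 ^ l * fact l)) ((pderiv ^^ l) ([:-1, 0, 1:] ^ l))"

text \<open>Associated Legendre function P_l^m(x) for m >= 0 (Condon-Shortley phase).\<close>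
definition assoc_legendre :: "nat \<Rightarrow> nat \<Rightarrow> real \<Rightarrow> real" where
  "assoc_legendre l m x =
     (-1) ^ m * (1 - x\<^sup>2) powr (real m / 2) * poly ((pderiv ^^ m) (legendre_poly l)) x"

definition sph_harm_nonneg :: "nat \<Rightarrow> nat \<Rightarrow> real \<Rightarrow> real \<Rightarrow> complex" where
  "sph_harm_nonneg l m \<theta> \<phi> =
     complex_of_real (sqrt ((2 * real l + 1) / (4 * pi) * (fact (l - m) / fact (l + m)))
                      * assoc_legendre l m (cos \<theta>))
     * exp (\<i> * of_nat m * complex_of_real \<phi>)"

definition sph_harm :: "nat \<Rightarrow> int \<Rightarrow> real \<Rightarrow> real \<Rightarrow> complex" where
  "sph_harm l m \<theta> \<phi> =
     (if m \<ge> 0 then sph_harm_nonneg l (nat m) \<theta> \<phi>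
      else (-1) ^ nat (- m) * cnj (sph_harm_nonneg l (nat (- m)) \<theta> \<phi>))"

text \<open>Element of V: R-tuple (indexed by r) of bandlimited functions with coefficients
  A l m r, written as functions of spherical coordinates (theta, phi).\<close>
definition bandlimited :: "nat \<Rightarrow> (nat \<Rightarrow> int \<Rightarrow> nat \<Rightarrow> complex) \<Rightarrow> nat \<Rightarrow> real \<Rightarrow> real \<Rightarrow> complex" where
  "bandlimited L A r \<theta> \<phi> =
     (\<Sum>l\<le>L. \<Sum>m\<in>{- int l..int l}. A l m r * sph_harm l m \<theta> \<phi>)"

definition sph_pt :: "real \<Rightarrow> real \<Rightarrow> real^3" where
  "sph_pt \<theta> \<phi> = vector [sin \<theta> * cos \<phi>, sin \<theta> * sin \<phi>, cos \<theta>]"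

definition sph_angles :: "real^3 \<Rightarrow> real \<times> real" where
  "sph_angles p = (arccos (p $ 3), Arg (Complex (p $ 1) (p $ 2)))"

definition SO3 :: "(real^3^3) set" where
  "SO3 = {g. orthogonal_matrix g \<and> det g = 1}"

definition rot_act :: "real^3^3 \<Rightarrow> (real \<Rightarrow> real \<Rightarrow> complex) \<Rightarrow> real \<Rightarrow> real \<Rightarrow> complex" where
  "rot_act g h \<theta> \<phi> = (case sph_angles (matrix_inv g *v sph_pt \<theta> \<phi>) of (t, p) \<Rightarrow> h t p)"

text \<open>Normalized (left-)Haar measure on SO(3): a Borel probability measure on SO(3)
  invariant under left translation. (It exists and is unique.)\<close>
definition haar_SO3 :: "(real^3^3) measure \<Rightarrow> bool" where
  "haar_SO3 \<mu> \<longleftrightarrow>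
     prob_space \<mu> \<and> space \<mu> = SO3 \<and> sets \<mu> = sets (restrict_space borel SO3) \<and>
     (\<forall>g\<in>SO3. distr \<mu> \<mu> (\<lambda>h. g ** h) = \<mu>)"

definition tomo :: "(real \<Rightarrow> real \<Rightarrow> complex) \<Rightarrow> real \<Rightarrow> complex" where
  "tomo h \<phi> = h (pi / 2) \<phi>"

definition unproj_m2 ::
  "(real^3^3) measure \<Rightarrow> (nat \<Rightarrow> real \<Rightarrow> real \<Rightarrow> complex) \<Rightarrow> nat \<Rightarrow> nat
     \<Rightarrow> real \<Rightarrow> real \<Rightarrow> real \<Rightarrow> real \<Rightarrow> complex" where
  "unproj_m2 \<mu> f r1 r2 \<theta>1 \<phi>1 \<theta>2 \<phi>2 =
     (LINT g|\<mu>. rot_act g (f r1) \<theta>1 \<phi>1 * cnj (rot_act g (f r2) \<theta>2 \<phi>2))"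

definition proj_m2 ::
  "(real^3^3) measure \<Rightarrow> (nat \<Rightarrow> real \<Rightarrow> real \<Rightarrow> complex) \<Rightarrow> nat \<Rightarrow> nat
     \<Rightarrow> real \<Rightarrow> real \<Rightarrow> complex" where
  "proj_m2 \<mu> f r1 r2 \<phi>1 \<phi>2 =
     (LINT g|\<mu>. tomo (rot_act g (f r1)) \<phi>1 * cnj (tomo (rot_act g (f r2)) \<phi>2))"

end

theory Submission
  imports Defs
begin

(* The projected second moment is the unprojected one evaluated at pairs of equatorial
   points. Conversely, invariance of the Haar measure makes the unprojected moment
   invariant under rotating both of its points simultaneously, and any two points of the
   sphere lie on a great circle that some rotation carries onto the equator. *)

lemma matrix_inv_eqI:
  fixes A B :: "'a::semiring_1^'n^'n"
  assumes "A ** B = mat 1" and "B ** A = mat 1"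
  shows "matrix_inv A = B"
proof -
  let ?C = "matrix_inv A"
  have "A ** ?C = mat 1 \<and> ?C ** A = mat 1"
    unfolding matrix_inv_def by (rule someI[of _ B]) (use assms in simp)
  then have "?C = ?C ** (A ** B)" and "?C ** A = mat 1"
    using assms by simp_all
  then show ?thesis
    by (metis matrix_mul_assoc matrix_mul_lid)
qed

lemma matrix_inv_orthogonal: "orthogonal_matrix A \<Longrightarrow> matrix_inv A = transpose A"
  by (rule matrix_inv_eqI) (simp_all add: orthogonal_matrix_def)

lemma norm_orthogonal_matrix_mult:
  fixes A :: "real^'n^'n"
  assumes "orthogonal_matrix A"
  shows "norm (A *v x) = norm x"
proof -
  have "orthogonal_transformation ((*v) A)"
    using assms by (simp add: orthogonal_transformation_matrix)
  then show ?thesis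
    by (rule orthogonal_transformation_norm)
qed

lemma integral_distr_invariant:
  fixes f :: "'a \<Rightarrow> 'b::{banach, second_countable_topology}"
  assumes T: "T \<in> M \<rightarrow>\<^sub>M M" and S: "S \<in> M \<rightarrow>\<^sub>M M"
    and TS: "\<And>x. x \<in> space M \<Longrightarrow> T (S x) = x"
    and invariant: "distr M M T = M"
  shows "(LINT x|M. f (T x)) = (LINT x|M. f x)"
proof (cases "f \<in> borel_measurable M")
  case True
  have "(LINT x|M. f x) = integral\<^sup>L (distr M M T) f"
    using invariant by simp
  also have "\<dots> = (LINT x|M. f (T x))"
    by (rule integral_distr[OF T True])
  finally show ?thesis by simp
next
  case False
  have "(\<lambda>x. f (T x)) \<notin> borel_measurable M"
  proof
    assume "(\<lambda>x. f (T x)) \<in> borel_measurable M"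
    then have "(\<lambda>x. f (T (S x))) \<in> borel_measurable M"
      using measurable_compose[OF S] by blast
    with False show False
      using measurable_cong[of M "\<lambda>x. f (T (S x))" f] TS by simp
  qed
  with False show ?thesis
    by (metis borel_measurable_integrable not_integrable_integral_eq)
qed

lemma SO3_mult: "g \<in> SO3 \<Longrightarrow> h \<in> SO3 \<Longrightarrow> g ** h \<in> SO3"
  by (simp add: SO3_def orthogonal_matrix_mul det_mul)

lemma SO3_transpose: "g \<in> SO3 \<Longrightarrow> transpose g \<in> SO3"
  by (simp add: SO3_def det_transpose)

lemma SO3_mult_transpose: "g \<in> SO3 \<Longrightarrow> g ** transpose g = mat 1"
  by (simp add: SO3_def orthogonal_matrix_def)

lemma SO3_left_mult_measurable:
  assumes "h \<in> SO3"
  shows "(\<lambda>g. h ** g) \<in> restrict_space borel SO3 \<rightarrow>\<^sub>M restrict_space borel SO3"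
proof (rule measurable_restrict_space3)
  have "continuous_on UNIV (\<lambda>g::real^3^3. h ** g)"
    unfolding matrix_matrix_mult_def by (intro continuous_intros)
  then show "(\<lambda>g::real^3^3. h ** g) \<in> borel \<rightarrow>\<^sub>M borel"
    using borel_measurable_continuous_onI by simp
  show "(\<lambda>g. h ** g) \<in> SO3 \<rightarrow> SO3"
    using assms SO3_mult by blast
qed

lemma integral_haar_SO3_left_mult:
  fixes \<Phi> :: "real^3^3 \<Rightarrow> 'b::{banach, second_countable_topology}"
  assumes haar: "haar_SO3 \<mu>" and h: "h \<in> SO3"
  shows "(LINT g|\<mu>. \<Phi> (h ** g)) = (LINT g|\<mu>. \<Phi> g)"
proof (rule integral_distr_invariant)
  have sets: "sets \<mu> = sets (restrict_space borel SO3)"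
    using haar by (simp add: haar_SO3_def)
  have left_mult: "(\<lambda>g. k ** g) \<in> \<mu> \<rightarrow>\<^sub>M \<mu>" if "k \<in> SO3" for k
    using SO3_left_mult_measurable[OF that] measurable_cong_sets[OF sets sets] by simp
  show "(\<lambda>g. h ** g) \<in> \<mu> \<rightarrow>\<^sub>M \<mu>" "(\<lambda>g. transpose h ** g) \<in> \<mu> \<rightarrow>\<^sub>M \<mu>"
    using h SO3_transpose by (auto intro: left_mult)
  show "h ** (transpose h ** g) = g" for g
    using h by (simp add: matrix_mul_assoc SO3_mult_transpose)
  show "distr \<mu> \<mu> (\<lambda>g. h ** g) = \<mu>"
    using haar h by (simp add: haar_SO3_def)
qed

lemma rot_act_SO3:
  "g \<in> SO3 \<Longrightarrow> rot_act g h \<theta> \<phi> = case_prod h (sph_angles (transpose g *v sph_pt \<theta> \<phi>))"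
  by (simp add: rot_act_def SO3_def matrix_inv_orthogonal split_beta)

definition unproj_m2_at ::
  "(real^3^3) measure \<Rightarrow> (nat \<Rightarrow> real \<Rightarrow> real \<Rightarrow> complex) \<Rightarrow> nat \<Rightarrow> nat
     \<Rightarrow> real^3 \<Rightarrow> real^3 \<Rightarrow> complex" where
  "unproj_m2_at \<mu> f r1 r2 x1 x2 =
     (LINT g|\<mu>. case_prod (f r1) (sph_angles (transpose g *v x1))
                * cnj (case_prod (f r2) (sph_angles (transpose g *v x2))))"

lemma unproj_m2_eq_unproj_m2_at:
  assumes "haar_SO3 \<mu>"
  shows "unproj_m2 \<mu> f r1 r2 \<theta>1 \<phi>1 \<theta>2 \<phi>2
           = unproj_m2_at \<mu> f r1 r2 (sph_pt \<theta>1 \<phi>1) (sph_pt \<theta>2 \<phi>2)"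
  unfolding unproj_m2_def unproj_m2_at_def
  using assms by (intro Bochner_Integration.integral_cong refl) (simp add: haar_SO3_def rot_act_SO3)

lemma unproj_m2_at_rotate:
  assumes haar: "haar_SO3 \<mu>" and h: "h \<in> SO3"
  shows "unproj_m2_at \<mu> f r1 r2 (h *v x1) (h *v x2) = unproj_m2_at \<mu> f r1 r2 x1 x2"
proof -
  have "transpose g *v (h *v x) = transpose (transpose h ** g) *v x" for g :: "real^3^3" and x
    by (simp add: matrix_transpose_mul matrix_vector_mul_assoc)
  then show ?thesis
    unfolding unproj_m2_at_def
    using integral_haar_SO3_left_mult[OF haar SO3_transpose[OF h],
        of "\<lambda>g. case_prod (f r1) (sph_angles (transpose g *v x1))
                * cnj (case_prod (f r2) (sph_angles (transpose g *v x2)))"]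
    by simp
qed

lemma norm_sph_pt: "norm (sph_pt \<theta> \<phi>) = 1"
proof -
  have "(sin \<theta> * cos \<phi>)\<^sup>2 + (sin \<theta> * sin \<phi>)\<^sup>2 + (cos \<theta>)\<^sup>2 = 1"
    by (simp add: power_mult_distrib flip: distrib_left)
  then show ?thesis
    by (simp add: norm_eq_1 inner_vec_def sum_3 sph_pt_def power2_eq_square)
qed

lemma unit_equatorial_eq_sph_pt:
  fixes v :: "real^3"
  assumes "norm v = 1" and "v $ 3 = 0"
  shows "v = sph_pt (pi/2) (Arg (Complex (v $ 1) (v $ 2)))"
proof -
  let ?z = "Complex (v $ 1) (v $ 2)"
  have "(v $ 1)\<^sup>2 + (v $ 2)\<^sup>2 = 1"
    using assms by (simp add: norm_eq_1 inner_vec_def sum_3 power2_eq_square)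
  then have "norm ?z = 1"
    by (simp add: cmod_def)
  then have "?z \<noteq> 0"
    by auto
  then have "cos (Arg ?z) = v $ 1" and "sin (Arg ?z) = v $ 2"
    using cos_Arg sin_Arg \<open>norm ?z = 1\<close> by auto
  then show ?thesis
    using assms(2) by (simp add: sph_pt_def vec_eq_iff forall_3)
qed

lemma SO3_moves_pair_into_equatorial_plane:
  fixes x1 x2 :: "real^3"
  obtains h where "h \<in> SO3" "(transpose h *v x1) $ 3 = 0" "(transpose h *v x2) $ 3 = 0"
proof -
  have "dim {x1, x2} \<le> card {x1, x2}"
    by (rule dim_le_card) (auto intro: span_base)
  also have "\<dots> \<le> 2"
    by (simp add: card_insert_if)
  also have "\<dots> < DIM(real^3)"
    by simp
  finally obtain n where "n \<noteq> 0" and n: "\<And>y. y \<in> span {x1, x2} \<Longrightarrow> orthogonal n y"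
    by (rule orthogonal_to_subspace_exists) auto
  obtain A where A: "rotation_matrix A" "A *v axis 3 1 = n /\<^sub>R norm n"
    using rotation_matrix_exists_basis[of "n /\<^sub>R norm n" 3] \<open>n \<noteq> 0\<close> by auto
  have "(transpose A *v x) $ 3 = 0" if "x \<in> {x1, x2}" for x
  proof -
    have "(transpose A *v x) $ 3 = (A *v axis 3 1) \<bullet> x"
      by (metis dot_lmul_matrix inner_axis' inner_real_def mult_1 vector_transpose_matrix)
    also have "\<dots> = 0"
      using n[of x] that by (simp add: A(2) orthogonal_def span_base)
    finally show ?thesis .
  qed
  moreover have "A \<in> SO3"
    using A(1) by (simp add: SO3_def rotation_matrix_def)
  ultimately show thesis
    using that by blast
qed

lemma sph_pt_pair_onto_equator:
  obtains h \<psi>1 \<psi>2 where "h \<in> SO3"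
    and "sph_pt \<theta>1 \<phi>1 = h *v sph_pt (pi/2) \<psi>1" and "sph_pt \<theta>2 \<phi>2 = h *v sph_pt (pi/2) \<psi>2"
proof -
  obtain h where h: "h \<in> SO3"
    and equatorial: "(transpose h *v sph_pt \<theta>1 \<phi>1) $ 3 = 0" "(transpose h *v sph_pt \<theta>2 \<phi>2) $ 3 = 0"
    by (rule SO3_moves_pair_into_equatorial_plane)
  have "\<exists>\<psi>. x = h *v sph_pt (pi/2) \<psi>" if "(transpose h *v x) $ 3 = 0" and "x = sph_pt \<theta> \<phi>" for x \<theta> \<phi>
  proof -
    have "orthogonal_matrix (transpose h)"
      using h by (simp add: SO3_def)
    then have "norm (transpose h *v x) = 1"
      using norm_orthogonal_matrix_mult norm_sph_pt that(2) by metis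
    then have "transpose h *v x = sph_pt (pi/2) (Arg (Complex ((transpose h *v x) $ 1) ((transpose h *v x) $ 2)))"
      using that(1) by (rule unit_equatorial_eq_sph_pt)
    moreover have "h *v (transpose h *v x) = x"
      using h by (metis matrix_vector_mul_assoc SO3_mult_transpose matrix_vector_mul_lid)
    ultimately show ?thesis
      by metis
  qed
  with h equatorial that show thesis
    by metis
qed

lemma proj_m2_eq_unproj_m2_equator:
  "proj_m2 \<mu> f r1 r2 \<phi>1 \<phi>2 = unproj_m2 \<mu> f r1 r2 (pi/2) \<phi>1 (pi/2) \<phi>2"
  unfolding proj_m2_def unproj_m2_def tomo_def ..

lemma unproj_m2_eq_proj_m2:
  assumes "haar_SO3 \<mu>"
  obtains \<psi>1 \<psi>2 where
    "\<And>f r1 r2. unproj_m2 \<mu> f r1 r2 \<theta>1 \<phi>1 \<theta>2 \<phi>2 = proj_m2 \<mu> f r1 r2 \<psi>1 \<psi>2"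
proof -
  obtain h \<psi>1 \<psi>2 where "h \<in> SO3"
    and "sph_pt \<theta>1 \<phi>1 = h *v sph_pt (pi/2) \<psi>1" and "sph_pt \<theta>2 \<phi>2 = h *v sph_pt (pi/2) \<psi>2"
    by (rule sph_pt_pair_onto_equator)
  then have "unproj_m2 \<mu> f r1 r2 \<theta>1 \<phi>1 \<theta>2 \<phi>2 = proj_m2 \<mu> f r1 r2 \<psi>1 \<psi>2" for f r1 r2
    using assms by (simp add: unproj_m2_eq_unproj_m2_at unproj_m2_at_rotate proj_m2_eq_unproj_m2_equator)
  then show thesis
    by (rule that)
qed

theorem lemma4p1:
  fixes L R :: nat
    and A A' :: "nat \<Rightarrow> int \<Rightarrow> nat \<Rightarrow> complex"
    and \<mu> :: "(real^3^3) measure"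
  assumes "R \<ge> 1"
    and "haar_SO3 \<mu>"
  shows "(\<forall>r1\<in>{1..R}. \<forall>r2\<in>{1..R}. \<forall>\<phi>1 \<phi>2.
            proj_m2 \<mu> (bandlimited L A) r1 r2 \<phi>1 \<phi>2
              = proj_m2 \<mu> (bandlimited L A') r1 r2 \<phi>1 \<phi>2)
     \<longleftrightarrow>
         (\<forall>r1\<in>{1..R}. \<forall>r2\<in>{1..R}. \<forall>\<theta>1 \<phi>1 \<theta>2 \<phi>2.
            unproj_m2 \<mu> (bandlimited L A) r1 r2 \<theta>1 \<phi>1 \<theta>2 \<phi>2
              = unproj_m2 \<mu> (bandlimited L A') r1 r2 \<theta>1 \<phi>1 \<theta>2 \<phi>2)"
    (is "?proj \<longleftrightarrow> ?unproj")
proof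
  assume proj: ?proj
  show ?unproj
  proof (intro ballI allI)
    fix r1 r2 \<theta>1 \<phi>1 \<theta>2 \<phi>2
    assume "r1 \<in> {1..R}" "r2 \<in> {1..R}"
    moreover obtain \<psi>1 \<psi>2 where
      "\<And>f r1 r2. unproj_m2 \<mu> f r1 r2 \<theta>1 \<phi>1 \<theta>2 \<phi>2 = proj_m2 \<mu> f r1 r2 \<psi>1 \<psi>2"
      using unproj_m2_eq_proj_m2[OF assms(2)] by blast
    ultimately show "unproj_m2 \<mu> (bandlimited L A) r1 r2 \<theta>1 \<phi>1 \<theta>2 \<phi>2
        = unproj_m2 \<mu> (bandlimited L A') r1 r2 \<theta>1 \<phi>1 \<theta>2 \<phi>2"
      using proj by simp
  qed
next
  assume ?unproj
  then show ?proj
    by (simp add: proj_m2_eq_unproj_m2_equator)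
qed

end
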